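(* Let $X\in\mathscr K$, fix $t$ and let $U(t,\cdot)\in L^2(\Omega)$, $\mathcal U(t,m)=\int_0^mU(t,\omega)\,d\omega$, and let $M$ be the right-continuous generalized inverse of $X$. Assume $U(t,\cdot)-\operatorname{Proj}_{\mathscr H_X}U(t,\cdot)\in N_X\mathscr K$. Then for every $k\in\mathbb{R}$, $$q'_{k,M}(t,X(m))\le\eta'_{k,M}(X(m))\,\mathcal U'_M(t,X(m))\quad\text{for a.e. }m\in\Omega.$$
   Context: $\Omega=(0,1)$; $\mathscr K=\{X\in L^2(\Omega):X\text{ nondecreasing}\}$ (right-continuous representatives); $M(x)=|\{m\in\Omega:X(m)\le x\}|$ is the right-continuous generalized inverse of $X$, the distribution function of $\mu=X_\#(\text{Lebesgue on }\Omega)$. $N_X\mathscr K=\{W\in L^2(\Omega):\int_\Omega W(Y-X)\,dm\le0\ \forall Y\in\mathscr K\}$. $\Omega_X=\{m:X\text{ constant near }m\}$; $\mathscr H_X$ is the subspace of $L^2(\Omega)$ functions constant on each interval contained in $\Omega_X$, and $\operatorname{Proj}_{\mathscr H_X}$ the orthogonal projection (identity off $\Omega_X$, averaging over each maximal interval of $\Omega_X$). With the Kružkov pair $\eta_k(m)=|m-k|$, $q_k(t,m)=\operatorname{sgn}(m-k)(\mathcal U(t,m)-\mathcal U(t,k))$, the functions $\eta'_{k,M}$, $q'_{k,M}(t,\cdot)$, $\mathcal U'_M(t,\cdot)$ denote the Radon–Nikodym derivatives of $\partial_x\eta_k(M)$, $\partial_xq_k(t,M)$, $\partial_x\mathcal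 U(t,M)$ with respect to $\mu=\partial_xM$; explicitly, for $G\in\{\eta_k,q_k(t,\cdot),\mathcal U(t,\cdot)\}$, $G'_M(x)=\frac{d}{dm}G(M(x))$ (classical/a.e. derivative in $m$) if $\mu(\{x\})=0$ and $G'_M(x)=\frac{G(M(x))-G(M(x-))}{M(x)-M(x-)}$ if $\mu(\{x\})>0$. *)

theory Defs
  imports "HOL-Analysis.Analysis"
begin

definition Omega :: "real set" where
  "Omega = {0<..<1}"

definition L2 :: "(real \<Rightarrow> real) \<Rightarrow> bool" where
  "L2 f \<longleftrightarrow> f \<in> borel_measurable (lebesgue_on Omega)
           \<and> integrable (lebesgue_on Omega) (\<lambda>m. (f m)\<^sup>2)"

definition inK :: "(real \<Rightarrow> real) \<Rightarrow> bool" where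
  "inK Y \<longleftrightarrow> L2 Y \<and> mono_on Omega Y"

definition normal_cone :: "(real \<Rightarrow> real) \<Rightarrow> (real \<Rightarrow> real) set" where
  "normal_cone X = {W. L2 W \<and>
     (\<forall>Y. inK Y \<longrightarrow> (\<integral>m. W m * (Y m - X m) \<partial>(lebesgue_on Omega)) \<le> 0)}"

definition Omega_X :: "(real \<Rightarrow> real) \<Rightarrow> real set" where
  "Omega_X X = {m \<in> Omega. \<exists>e>0. ball m e \<subseteq> Omega \<and> (\<forall>m'\<in>ball m e. X m' = X m)}"

text \<open>orthogonal projection onto H_X: identity off Omega_X, averaging over
  each maximal interval (connected component) of Omega_X\<close>
definition Proj_H :: "(real \<Rightarrow> real) \<Rightarrow> (real \<Rightarrow> real) \<Rightarrow> real \<Rightarrow> real" where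
  "Proj_H X f m =
     (if m \<in> Omega_X X then
        (let I = connected_component_set (Omega_X X) m in
           (\<integral>w. f w \<partial>(lebesgue_on I)) / measure lebesgue I)
      else f m)"

text \<open>right-continuous generalized inverse / distribution function M\<close>
definition distM :: "(real \<Rightarrow> real) \<Rightarrow> real \<Rightarrow> real" where
  "distM X x = measure lebesgue {m \<in> Omega. X m \<le> x}"

definition mu :: "(real \<Rightarrow> real) \<Rightarrow> real measure" where
  "mu X = distr (lebesgue_on Omega) borel X"

text \<open>Radon-Nikodym derivative of d/dx G(M) with respect to mu\<close>
definition RN_deriv_M :: "(real \<Rightarrow> real) \<Rightarrow> (real \<Rightarrow> real) \<Rightarrow> real \<Rightarrow> real" where
  "RN_deriv_M X G x =
     (if measure (mu X) {x} > 0 then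
        (G (distM X x) - G (Lim (at_left x) (distM X)))
          / (distM X x - Lim (at_left x) (distM X))
      else deriv G (distM X x))"

definition primU :: "(real \<Rightarrow> real \<Rightarrow> real) \<Rightarrow> real \<Rightarrow> real \<Rightarrow> real" where
  "primU U t m = (\<integral>w\<in>{0..m} \<inter> Omega. U t w \<partial>lebesgue)"

definition eta :: "real \<Rightarrow> real \<Rightarrow> real" where
  "eta k m = \<bar>m - k\<bar>"

definition qflux :: "(real \<Rightarrow> real \<Rightarrow> real) \<Rightarrow> real \<Rightarrow> real \<Rightarrow> real \<Rightarrow> real" where
  "qflux U k t m = sgn (m - k) * (primU U t m - primU U t k)"

end

theory Submission
  imports Defs "HOL-Probability.Distribution_Functions"
begin

(* By Lebesgue's differentiation theorem, a consequence of the Vitali covering theorem, the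
   primitive of U(t,.) is differentiable with derivative U(t,m) at almost every m.  Fix such an m,
   let x = X m, alpha = M(x-) and beta = M(x).  If alpha = beta, then M(x) = m and all three
   Radon-Nikodym derivatives are classical derivatives at m, where the inequality is an equality.
   If alpha < beta, then X = x on (alpha, beta), which is a maximal interval of Omega_X, so the
   projection replaces U(t,.) there by its average.  Testing the normal cone with X truncated at
   level x - delta to the left of k and letting delta tend to 0 shows that the integral of
   U(t,.) minus its average over (alpha, k) is nonnegative: the primitive lies above its chord
   over [alpha, beta].  The inequality between the Kruzkov difference quotients then follows by
   elementary algebra. *)

section \<open>Lebesgue's differentiation theorem\<close>

lemma AE_lebesgue_neq: "AE x in lebesgue. x \<noteq> (c::'a::euclidean_space)"
  by (rule AE_completion[OF AE_lborel_singleton])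

lemma integrable_imp_set_integrable:
  fixes f :: "'a \<Rightarrow> 'b::{banach, second_countable_topology}"
  shows "integrable M f \<Longrightarrow> A \<in> sets M \<Longrightarrow> set_integrable M A f"
  unfolding set_integrable_def by (rule integrable_mult_indicator)

lemma set_integrable_const:
  fixes c :: "'b::{banach, second_countable_topology}"
  shows "A \<in> sets M \<Longrightarrow> emeasure M A < \<infinity> \<Longrightarrow> set_integrable M A (\<lambda>_. c)"
  unfolding set_integrable_def by (intro integrable_scaleR_left integrable_real_indicator)

lemma set_integral_nonneg_disjoint_UN:
  fixes f :: "'a \<Rightarrow> real"
  assumes C: "countable C" and disj: "disjoint_family_on A C" and A: "\<And>i. i \<in> C \<Longrightarrow> A i \<in> sets M"
    and int: "set_integrable M (\<Union>i\<in>C. A i) f"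
    and nonneg: "\<And>i. i \<in> C \<Longrightarrow> 0 \<le> (LINT x:A i|M. f x)"
  shows "0 \<le> (LINT x:(\<Union>i\<in>C. A i)|M. f x)"
proof (cases "C = {}")
  case True
  then show ?thesis
    by (simp add: set_lebesgue_integral_def)
next
  case False
  define B where "B n = (\<Union>i\<in>from_nat_into C ` {..<n}. A i)" for n
  have C_n: "from_nat_into C ` {..<n} \<subseteq> C" for n
    using from_nat_into[OF False] by blast
  have B_sets: "B n \<in> sets M" for n
    unfolding B_def using C_n A by (intro sets.finite_UN) blast+
  have "incseq B"
    unfolding B_def incseq_def by (intro allI impI UN_mono image_mono) auto
  moreover have UN_B: "(\<Union>n. B n) = (\<Union>i\<in>C. A i)"
  proof (intro equalityI subsetI)
    fix x assume "x \<in> (\<Union>n. B n)"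
    then show "x \<in> (\<Union>i\<in>C. A i)"
      using C_n unfolding B_def by blast
  next
    fix x assume "x \<in> (\<Union>i\<in>C. A i)"
    then obtain i where i: "i \<in> C" "x \<in> A i" by blast
    then have "i \<in> from_nat_into C ` {..<Suc (to_nat_on C i)}"
      using from_nat_into_to_nat_on[OF C] by (intro image_eqI[where x="to_nat_on C i"]) auto
    then show "x \<in> (\<Union>n. B n)"
      unfolding B_def using i by (intro UN_I[of "Suc (to_nat_on C i)"]) auto
  qed
  ultimately have "(\<lambda>n. LINT x:B n|M. f x) \<longlonglongrightarrow> (LINT x:(\<Union>n. B n)|M. f x)"
    by (intro set_integral_cont_up B_sets) (simp_all add: int)
  moreover have "0 \<le> (LINT x:B n|M. f x)" for n
  proof -
    have "(LINT x:B n|M. f x) = (\<Sum>i\<in>from_nat_into C ` {..<n}. LINT x:A i|M. f x)"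
      unfolding B_def
    proof (rule set_integral_finite_Union)
      show "disjoint_family_on A (from_nat_into C ` {..<n})"
        using disjoint_family_on_mono[OF C_n disj] .
      show "set_integrable M (A i) f" if "i \<in> from_nat_into C ` {..<n}" for i
        by (rule set_integrable_subset[OF int A]) (use that C_n in blast)+
      show "A i \<in> sets M" if "i \<in> from_nat_into C ` {..<n}" for i
        using that C_n A by blast
    qed simp
    also have "\<dots> \<ge> 0"
      using nonneg C_n by (intro sum_nonneg) blast
    finally show ?thesis .
  qed
  ultimately show ?thesis
    unfolding UN_B by (simp add: LIMSEQ_le_const)
qed

lemma sets_lebesgue_outer_open_decseq:
  fixes S :: "'a::euclidean_space set"
  assumes S: "S \<in> sets lebesgue"
  obtains T where "\<And>n. open (T n)" "\<And>n. S \<subseteq> T n" "decseq T" "(\<Inter>n. T n) - S \<in> null_sets lebesgue"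
proof -
  have "\<exists>G. open G \<and> S \<subseteq> G \<and> G - S \<in> lmeasurable \<and> emeasure lebesgue (G - S) < 1 / Suc n"
    for n :: nat
    using sets_lebesgue_outer_open[OF S, of "1 / Suc n"]
    by (metis of_nat_0_less_iff zero_less_Suc zero_less_divide_1_iff)
  then obtain G where G: "\<And>n. open (G n)" "\<And>n. S \<subseteq> G n" "\<And>n. G n - S \<in> lmeasurable"
    "\<And>n. emeasure lebesgue (G n - S) < 1 / Suc n"
    by metis
  define T where "T n = (\<Inter>i\<le>n. G i)" for n
  have "open (T n)" "S \<subseteq> T n" for n
    unfolding T_def using G by auto
  moreover have "decseq T"
    unfolding T_def decseq_def by auto
  moreover have "(\<Inter>n. T n) - S \<in> null_sets lebesgue"
  proof -
    have sub: "(\<Inter>n. T n) - S \<subseteq> G n - S" for n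
      unfolding T_def by blast
    have "(\<Inter>n. T n) - S \<in> sets lebesgue"
      using \<open>\<And>n. open (T n)\<close> S by (intro sets.Diff sets.countable_INT) (auto intro: borel_open)
    then have lmeas: "(\<Inter>n. T n) - S \<in> lmeasurable"
      by (rule fmeasurableI2[OF G(3) sub[of 0]])
    have "measure lebesgue ((\<Inter>n. T n) - S) \<le> 1 / Suc n" for n :: nat
    proof -
      have "measure lebesgue ((\<Inter>n. T n) - S) \<le> measure lebesgue (G n - S)"
        using lmeas G(3) by (intro measure_mono_fmeasurable[OF sub]) auto
      also have "\<dots> < 1 / Suc n"
        using G(4)[of n] emeasure_eq_measure2[OF G(3)[of n]] by (simp add: ennreal_less_iff)
      finally show ?thesis by simp
    qed
    then have "measure lebesgue ((\<Inter>n. T n) - S) = 0"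
      by (metis measure_nonneg nat_approx_posE not_le order.antisym)
    then show ?thesis
      using lmeas by (simp add: null_sets_def emeasure_eq_measure2)
  qed
  ultimately show thesis
    using that by blast
qed

lemma negligible_if_measure_le_outer_integral:
  fixes S U :: "'a::euclidean_space set" and h :: "'a \<Rightarrow> real"
  assumes S: "S \<in> sets lebesgue" "S \<subseteq> U" and U: "open U" "U \<in> lmeasurable"
    and h: "set_integrable lebesgue U h" and c: "0 < c"
    and bound: "\<And>T. open T \<Longrightarrow> S \<subseteq> T \<Longrightarrow> T \<subseteq> U \<Longrightarrow>
      c * measure lebesgue S \<le> (LINT x:T - S|lebesgue. h x)"
  shows "negligible S"
proof -
  obtain T where T: "\<And>n. open (T n)" "\<And>n. S \<subseteq> T n" "decseq T"
    and null: "(\<Inter>n. T n) - S \<in> null_sets lebesgue"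
    using sets_lebesgue_outer_open_decseq[OF S(1)] by blast
  define A where "A n = U \<inter> T n - S" for n
  have A_sets: "A n \<in> sets lebesgue" for n
    unfolding A_def using U T S by (auto intro: borel_open)
  have "decseq A"
    using \<open>decseq T\<close> unfolding A_def decseq_def by blast
  moreover have "set_integrable lebesgue (A 0) h"
    by (rule set_integrable_subset[OF h A_sets]) (auto simp: A_def)
  ultimately have lim: "(\<lambda>n. LINT x:A n|lebesgue. h x) \<longlonglongrightarrow> (LINT x:(\<Inter>n. A n)|lebesgue. h x)"
    using A_sets by (intro set_integral_cont_down)
  have "(\<Inter>n. A n) \<in> sets lebesgue"
    using A_sets by (intro sets.countable_INT) auto
  then have "(\<Inter>n. A n) \<in> null_sets lebesgue"
    by (rule null_sets_subset[OF null]) (auto simp: A_def)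
  then have "AE x in lebesgue. x \<notin> (\<Inter>n. A n)"
    by (rule AE_not_in)
  then have "(LINT x:(\<Inter>n. A n)|lebesgue. h x) = 0"
    unfolding set_lebesgue_integral_def
    by (intro integral_eq_zero_AE) (auto elim!: eventually_mono simp: indicator_def)
  moreover have "c * measure lebesgue S \<le> (LINT x:A n|lebesgue. h x)" for n
    unfolding A_def using U T S by (intro bound) auto
  ultimately have "c * measure lebesgue S \<le> 0"
    using lim by (metis LIMSEQ_le_const)
  then have "measure lebesgue S = 0"
    using c by (simp add: mult_le_0_iff order.antisym)
  moreover have "S \<in> lmeasurable"
    using fmeasurableI2[OF U(2) S(2) S(1)] .
  ultimately show ?thesis
    by (simp add: negligible_iff_measure0)
qed

definition indef_integral :: "(real \<Rightarrow> real) \<Rightarrow> real \<Rightarrow> real" where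
  "indef_integral f x = (LINT w:{..x}|lebesgue. f w)"

lemma indef_integral_diff:
  assumes f: "integrable lebesgue f" and "a \<le> b"
  shows "indef_integral f b - indef_integral f a = (LINT w:{a<..<b}|lebesgue. f w)"
proof -
  have "{..b} = {..a} \<union> {a<..b}"
    using \<open>a \<le> b\<close> by auto
  moreover have "(LINT w:{..a} \<union> {a<..b}|lebesgue. f w)
      = (LINT w:{..a}|lebesgue. f w) + (LINT w:{a<..b}|lebesgue. f w)"
    by (rule set_integral_Un) (auto intro: integrable_imp_set_integrable[OF f])
  moreover have "(LINT w:{a<..b}|lebesgue. f w) = (LINT w:{a<..<b}|lebesgue. f w)"
    by (rule set_integral_discrete_difference[where X="{b}"]) auto
  ultimately show ?thesis
    unfolding indef_integral_def by simp
qed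

lemma indef_integral_uminus: "indef_integral (\<lambda>x. - f x) y = - indef_integral f y"
  unfolding indef_integral_def set_lebesgue_integral_def by simp

lemma isCont_indef_integral:
  assumes f: "integrable lebesgue f"
  shows "isCont (indef_integral f) x"
proof (rule continuous_at_sequentiallyI)
  fix y :: "nat \<Rightarrow> real"
  assume y: "y \<longlonglongrightarrow> x"
  have "AE w in lebesgue. (\<lambda>n. indicator {..y n} w *\<^sub>R f w) \<longlonglongrightarrow> indicator {..x} w *\<^sub>R f w"
    using AE_lebesgue_neq[of x]
  proof eventually_elim
    case (elim w)
    then consider "w < x" | "x < w"
      by linarith
    then have "\<forall>\<^sub>F n in sequentially. indicator {..y n} w = (indicator {..x} w :: real)"
    proof cases
      case 1
      show ?thesis
        using order_tendstoD(1)[OF y 1] by eventually_elim (use 1 in auto)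
    next
      case 2
      show ?thesis
        using order_tendstoD(2)[OF y 2] by eventually_elim (use 2 in auto)
    qed
    then show ?case
      by (rule tendsto_eventually[OF eventually_mono]) simp
  qed
  then show "(\<lambda>n. indef_integral f (y n)) \<longlonglongrightarrow> indef_integral f x"
    unfolding indef_integral_def set_lebesgue_integral_def
  proof (rule integral_dominated_convergence[where w="\<lambda>w. norm (f w)", rotated 3])
    show "AE w in lebesgue. norm (indicator {..y n} w *\<^sub>R f w) \<le> norm (f w)" for n
      by (intro AE_I2) (simp split: split_indicator)
  qed (use f borel_measurable_integrable[OF f]
      in \<open>auto intro!: borel_measurable_times borel_measurable_indicator\<close>)
qed

definition steep_points :: "(real \<Rightarrow> real) \<Rightarrow> real \<Rightarrow> real set" where
  "steep_points F s =
    {x. \<forall>n::nat. \<exists>a b. a < x \<and> x < b \<and> b - a < 1 / Suc n \<and> s * (b - a) < F b - F a}"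

lemma steep_points_sets: "steep_points F s \<in> sets lebesgue"
proof -
  define G where "G n = (\<Union>(a, b)\<in>{(a, b). b - a < 1 / Suc n \<and> s * (b - a) < F b - F a}. {a<..<b})"
    for n :: nat
  have "steep_points F s = (\<Inter>n. G n)"
    unfolding steep_points_def G_def by (auto; meson)
  moreover have "open (G n)" for n
    unfolding G_def by (intro open_UN) auto
  then have "G n \<in> sets lebesgue" for n
    by (simp add: borel_open)
  ultimately show ?thesis
    by auto
qed

lemma eventually_diff_quotient_le:
  fixes F :: "real \<Rightarrow> real"
  assumes cont: "isCont F x" and x: "x \<notin> steep_points F s"
  shows "\<forall>\<^sub>F y in at x. (F y - F x) / (y - x) \<le> s"
proof -
  obtain n :: nat
    where "\<not> (\<exists>a b. a < x \<and> x < b \<and> b - a < 1 / Suc n \<and> s * (b - a) < F b - F a)"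
    using x unfolding steep_points_def by blast
  then have n: "F b - F a \<le> s * (b - a)" if "a < x" "x < b" "b - a < 1 / Suc n" for a b
    using that by (meson not_less)
  define d where "d = 1 / Suc n / 2"
  have "d > 0" and two_d: "2 * d = 1 / Suc n"
    unfolding d_def by (simp_all add: field_simps)
  have lim_left: "(F \<longlongrightarrow> F x) (at_left x)" and lim_right: "(F \<longlongrightarrow> F x) (at_right x)"
    using cont unfolding isCont_def filterlim_at_split by auto
  have right: "F y - F x \<le> s * (y - x)" if "x < y" "y < x + d" for y
  proof (rule tendsto_le[OF trivial_limit_at_left_real])
    show "((\<lambda>a. s * (y - a)) \<longlongrightarrow> s * (y - x)) (at_left x)"
      by (intro tendsto_intros)
    show "((\<lambda>a. F y - F a) \<longlongrightarrow> F y - F x) (at_left x)"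
      by (intro tendsto_intros lim_left)
    have "\<forall>\<^sub>F a in at_left x. a \<in> {x - d<..<x}"
      using \<open>d > 0\<close> by (intro eventually_at_left_real) simp
    then show "\<forall>\<^sub>F a in at_left x. F y - F a \<le> s * (y - a)"
      by eventually_elim (rule n, use that two_d in auto)
  qed
  have left: "F x - F y \<le> s * (x - y)" if "y < x" "x - d < y" for y
  proof (rule tendsto_le[OF trivial_limit_at_right_real])
    show "((\<lambda>b. s * (b - y)) \<longlongrightarrow> s * (x - y)) (at_right x)"
      by (intro tendsto_intros)
    show "((\<lambda>b. F b - F y) \<longlongrightarrow> F x - F y) (at_right x)"
      by (intro tendsto_intros lim_right)
    have "\<forall>\<^sub>F b in at_right x. b \<in> {x<..<x + d}"
      using \<open>d > 0\<close> by (intro eventually_at_right_real) simp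
    then show "\<forall>\<^sub>F b in at_right x. F b - F y \<le> s * (b - y)"
      by eventually_elim (rule n, use that two_d in auto)
  qed
  show ?thesis
    unfolding eventually_at
  proof (intro exI[of _ d] conjI ballI impI)
    fix y assume y: "y \<noteq> x \<and> dist y x < d"
    show "(F y - F x) / (y - x) \<le> s"
    proof (cases "x < y")
      case True
      then show ?thesis
        using right[of y] y by (simp add: dist_real_def pos_divide_le_eq)
    next
      case False
      have "(F y - F x) / (y - x) = (F x - F y) / (x - y)"
        by (metis minus_diff_eq minus_divide_divide)
      also have "\<dots> \<le> s"
        using False left[of y] y by (simp add: dist_real_def pos_divide_le_eq)
      finally show ?thesis .
    qed
  qed (use \<open>d > 0\<close> in simp)
qed

lemma steep_points_Vitali_cover:
  fixes F :: "real \<Rightarrow> real"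
  assumes S: "S \<subseteq> steep_points F s" and T: "open T" "S \<subseteq> T"
  obtains C where "countable C" "disjoint_family_on (\<lambda>i. {fst i<..<snd i}) C"
    "\<And>i. i \<in> C \<Longrightarrow> fst i < snd i \<and> {fst i<..<snd i} \<subseteq> T
      \<and> s * (snd i - fst i) < F (snd i) - F (fst i)"
    "negligible (S - (\<Union>i\<in>C. {fst i<..<snd i}))"
proof -
  define K where "K = {i. fst i < snd i \<and> {fst i<..<snd i} \<subseteq> T
    \<and> s * (snd i - fst i) < F (snd i) - F (fst i)}"
  define c where "c i = (fst i + snd i) / 2" for i :: "real \<times> real"
  define \<rho> where "\<rho> i = (snd i - fst i) / 2" for i :: "real \<times> real"
  have ball: "ball (c i) (\<rho> i) = {fst i<..<snd i}" for i
    unfolding ball_eq_greaterThanLessThan c_def \<rho>_def by (simp add: field_simps)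
  obtain C where "countable C" "C \<subseteq> K"
    and disj: "pairwise (\<lambda>i j. disjnt (ball (c i) (\<rho> i)) (ball (c j) (\<rho> j))) C"
    and "negligible (S - (\<Union>i\<in>C. ball (c i) (\<rho> i)))"
  proof (rule Vitali_covering_theorem_balls[of S K c \<rho>])
    fix x d :: real
    assume "x \<in> S" "0 < d"
    then obtain e where "0 < e" "ball x e \<subseteq> T"
      using T openE by blast
    obtain n :: nat where n: "1 / Suc n < min e d"
      using \<open>0 < e\<close> \<open>0 < d\<close> by (metis min_less_iff_conj nat_approx_posE)
    obtain a b where ab: "a < x" "x < b" "b - a < 1 / Suc n" "s * (b - a) < F b - F a"
      using \<open>x \<in> S\<close> S unfolding steep_points_def by blast
    have "{a<..<b} \<subseteq> ball x e"
      using ab n by (auto simp: dist_real_def)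
    then have "(a, b) \<in> K"
      using ab \<open>ball x e \<subseteq> T\<close> unfolding K_def by auto
    moreover have "x \<in> ball (c (a, b)) (\<rho> (a, b))" "\<rho> (a, b) < d"
      using ab n unfolding ball by (auto simp: \<rho>_def)
    ultimately show "\<exists>i. i \<in> K \<and> x \<in> ball (c i) (\<rho> i) \<and> \<rho> i < d"
      by blast
  qed
  moreover have "disjoint_family_on (\<lambda>i. {fst i<..<snd i}) C"
    using disj unfolding disjoint_family_on_def pairwise_def disjnt_def ball by blast
  ultimately show thesis
    using that unfolding K_def ball by blast
qed

lemma steep_points_cover:
  fixes f :: "real \<Rightarrow> real"
  assumes f: "integrable lebesgue f" and S: "S \<subseteq> steep_points (indef_integral f) s"
    and T: "open T" "T \<in> lmeasurable" "S \<subseteq> T"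
  obtains V where "V \<in> sets lebesgue" "V \<subseteq> T" "negligible (S - V)"
    "0 \<le> (LINT x:V|lebesgue. f x - s)"
proof -
  define I where "I i = {fst i<..<snd i}" for i :: "real \<times> real"
  obtain C where C: "countable C" "disjoint_family_on I C"
    and K: "\<And>i. i \<in> C \<Longrightarrow> fst i < snd i \<and> I i \<subseteq> T
      \<and> s * (snd i - fst i) < indef_integral f (snd i) - indef_integral f (fst i)"
    and cover: "negligible (S - (\<Union>i\<in>C. I i))"
    using steep_points_Vitali_cover[OF S T(1,3)] unfolding I_def by blast
  have "(\<Union>i\<in>C. I i) \<subseteq> T"
    using K by blast
  moreover have sets: "(\<Union>i\<in>C. I i) \<in> sets lebesgue"
    unfolding I_def using C(1) by (intro sets.countable_UN'') auto
  moreover have "0 \<le> (LINT x:(\<Union>i\<in>C. I i)|lebesgue. f x - s)"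
  proof (rule set_integral_nonneg_disjoint_UN[OF C])
    have f_T: "set_integrable lebesgue T f" and const_T: "set_integrable lebesgue T (\<lambda>_. s)"
      using T(2) by (auto intro!: integrable_imp_set_integrable[OF f] set_integrable_const)
    show "set_integrable lebesgue (\<Union>i\<in>C. I i) (\<lambda>x. f x - s)"
      using set_integral_diff(1)[OF f_T const_T] sets \<open>(\<Union>i\<in>C. I i) \<subseteq> T\<close>
      by (rule set_integrable_subset)
    fix i assume "i \<in> C"
    then have "I i \<subseteq> T" and i: "fst i < snd i"
      "s * (snd i - fst i) < indef_integral f (snd i) - indef_integral f (fst i)"
      using K by auto
    have "(LINT x:I i|lebesgue. f x - s) = (LINT x:I i|lebesgue. f x) - (LINT x:I i|lebesgue. s)"
      using \<open>I i \<subseteq> T\<close>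
      by (intro set_integral_diff(2) set_integrable_subset[OF f_T]
          set_integrable_subset[OF const_T]) (auto simp: I_def)
    also have "\<dots> = indef_integral f (snd i) - indef_integral f (fst i) - s * (snd i - fst i)"
      using i by (simp add: I_def indef_integral_diff[OF f] set_integral_const)
    finally show "0 \<le> (LINT x:I i|lebesgue. f x - s)"
      using i by simp
  qed (auto simp: I_def)
  ultimately show thesis
    using that cover by blast
qed

lemma measure_steep_points_le:
  fixes f :: "real \<Rightarrow> real"
  assumes f: "integrable lebesgue f"
    and S: "S \<in> sets lebesgue" "S \<subseteq> {x. f x < r} \<inter> steep_points (indef_integral f) s"
    and T: "open T" "T \<in> lmeasurable" "S \<subseteq> T"
  shows "(s - r) * measure lebesgue S \<le> (LINT x:T - S|lebesgue. \<bar>f x\<bar> + \<bar>s\<bar>)"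
proof -
  obtain V where V: "V \<in> sets lebesgue" "V \<subseteq> T" "negligible (S - V)"
    and nonneg: "0 \<le> (LINT x:V|lebesgue. f x - s)"
    using steep_points_cover[OF f _ T] S(2) by blast
  have f_T: "set_integrable lebesgue T f" and const_T: "set_integrable lebesgue T (\<lambda>_. s)"
    using T(2) by (auto intro!: integrable_imp_set_integrable[OF f] set_integrable_const)
  have int_V: "set_integrable lebesgue V (\<lambda>x. f x - s)"
    using set_integral_diff(1)[OF f_T const_T] V(1,2) by (rule set_integrable_subset)
  have "S \<in> lmeasurable"
    by (rule fmeasurableI2[OF T(2) T(3) S(1)])
  then have int_S: "integrable lebesgue (\<lambda>x. (r - s) * indicator S x)"
    by (intro integrable_mult_right integrable_real_indicator) (auto simp: fmeasurable_def)
  have "set_integrable lebesgue (T - S) (\<lambda>x. \<bar>f x\<bar> + \<bar>s\<bar>)"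
    using set_integral_add(1)[OF set_integrable_abs[OF f_T] set_integrable_abs[OF const_T]]
    by (rule set_integrable_subset) (use S T in auto)
  then have int_TS: "integrable lebesgue (\<lambda>x. indicator (T - S) x * (\<bar>f x\<bar> + \<bar>s\<bar>))"
    by (simp add: set_integrable_def)
  have "(LINT x:V|lebesgue. f x - s)
      \<le> (LINT x|lebesgue. (r - s) * indicator S x + indicator (T - S) x * (\<bar>f x\<bar> + \<bar>s\<bar>))"
    unfolding set_lebesgue_integral_def
  proof (rule integral_mono_AE)
    have "S - V \<in> null_sets lebesgue"
      using V(3) by (simp add: negligible_iff_null_sets)
    from AE_not_in[OF this]
    show "AE x in lebesgue. indicator V x *\<^sub>R (f x - s)
        \<le> (r - s) * indicator S x + indicator (T - S) x * (\<bar>f x\<bar> + \<bar>s\<bar>)"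
      by eventually_elim (use V(2) S(2) in \<open>auto simp: indicator_def\<close>)
  qed (use int_V int_S int_TS in \<open>auto simp: set_integrable_def\<close>)
  also have "\<dots> = (r - s) * measure lebesgue S + (LINT x:T - S|lebesgue. \<bar>f x\<bar> + \<bar>s\<bar>)"
    using int_S int_TS \<open>S \<in> lmeasurable\<close> by (simp add: set_lebesgue_integral_def)
  finally show ?thesis
    using nonneg by (simp add: left_diff_distrib)
qed

lemma negligible_below_steep_points:
  fixes f :: "real \<Rightarrow> real"
  assumes f: "integrable lebesgue f" and "r < s"
  shows "negligible ({x. f x < r} \<inter> steep_points (indef_integral f) s)"
proof -
  let ?S = "{x. f x < r} \<inter> steep_points (indef_integral f) s"
  have "negligible (?S \<inter> ball 0 n)" for n :: nat
  proof (rule negligible_if_measure_le_outer_integral)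
    have "{x \<in> space lebesgue. f x < r} \<in> sets lebesgue"
      using borel_measurable_integrable[OF f] by measurable
    then have "{x. f x < r} \<in> sets lebesgue"
      by simp
    then show "?S \<inter> ball 0 n \<in> sets lebesgue"
      using steep_points_sets by auto
    show "?S \<inter> ball 0 n \<subseteq> ball 0 (n + 1)"
      by auto
    show "set_integrable lebesgue (ball 0 (n + 1)) (\<lambda>x. \<bar>f x\<bar> + \<bar>s\<bar>)"
      by (intro set_integral_add set_integrable_abs integrable_imp_set_integrable[OF f]
          set_integrable_const)
        (use lmeasurable_ball[of 0 "n + 1"] in \<open>auto simp: fmeasurable_def\<close>)
    show "(s - r) * measure lebesgue (?S \<inter> ball 0 n)
        \<le> (LINT x:T - ?S \<inter> ball 0 n|lebesgue. \<bar>f x\<bar> + \<bar>s\<bar>)"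
      if "open T" "?S \<inter> ball 0 n \<subseteq> T" "T \<subseteq> ball 0 (n + 1)" for T
    proof (rule measure_steep_points_le[OF f])
      show "T \<in> lmeasurable"
        using that by (intro fmeasurableI2[OF _ \<open>T \<subseteq> ball 0 (n + 1)\<close>]) (auto intro: borel_open)
    qed (use that \<open>?S \<inter> ball 0 n \<in> sets lebesgue\<close> in auto)
  qed (use \<open>r < s\<close> in auto)
  then have "negligible (\<Union>n::nat. ?S \<inter> ball 0 n)"
    by (rule negligible_Union_nat)
  moreover have "?S \<subseteq> (\<Union>n::nat. ?S \<inter> ball 0 n)"
    by (auto simp: dist_real_def intro: reals_Archimedean2)
  ultimately show ?thesis
    using negligible_subset by blast
qed

lemma eventually_diff_quotient_less:
  fixes f :: "real \<Rightarrow> real"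
  assumes f: "integrable lebesgue f" and "f x < a"
    and not_steep: "\<And>r s. r \<in> \<rat> \<Longrightarrow> s \<in> \<rat> \<Longrightarrow> f x < r \<Longrightarrow> r < s \<Longrightarrow>
      x \<notin> steep_points (indef_integral f) s"
  shows "\<forall>\<^sub>F y in at x. (indef_integral f y - indef_integral f x) / (y - x) < a"
proof -
  obtain r where r: "r \<in> \<rat>" "f x < r" "r < a"
    using Rats_dense_in_real[OF \<open>f x < a\<close>] by blast
  obtain s where s: "s \<in> \<rat>" "r < s" "s < a"
    using Rats_dense_in_real[OF \<open>r < a\<close>] by blast
  have "\<forall>\<^sub>F y in at x. (indef_integral f y - indef_integral f x) / (y - x) \<le> s"
    using isCont_indef_integral[OF f] not_steep[OF r(1) s(1) r(2) s(2)]
    by (rule eventually_diff_quotient_le)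
  then show ?thesis
    by (rule eventually_mono) (use \<open>s < a\<close> in auto)
qed

theorem lebesgue_differentiation:
  fixes f :: "real \<Rightarrow> real"
  assumes f: "integrable lebesgue f"
  shows "AE x in lebesgue. (indef_integral f has_real_derivative f x) (at x)"
proof -
  define bad where "bad g r s = {x. g x < r} \<inter> steep_points (indef_integral g) s"
    for g :: "real \<Rightarrow> real" and r s
  define P where "P = {(r, s). r \<in> \<rat> \<and> s \<in> \<rat> \<and> r < (s::real)}"
  define N where "N = (\<Union>(r, s)\<in>P. bad f r s \<union> bad (\<lambda>x. - f x) r s)"
  have "countable P"
    by (rule countable_subset[of _ "\<rat> \<times> \<rat>"]) (auto simp: P_def countable_rat)
  have "negligible N"
    unfolding N_def
  proof (rule negligible_countable_Union)
    show "countable ((\<lambda>(r, s). bad f r s \<union> bad (\<lambda>x. - f x) r s) ` P)"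
      using \<open>countable P\<close> by simp
  qed (use f in \<open>auto simp: P_def bad_def intro!: negligible_below_steep_points\<close>)
  moreover have "(indef_integral f has_real_derivative f x) (at x)" if "x \<notin> N" for x
  proof -
    have not_steep: "x \<notin> steep_points (indef_integral g) s"
      if "g = f \<or> g = (\<lambda>x. - f x)" "r \<in> \<rat>" "s \<in> \<rat>" "g x < r" "r < s" for g r s
      using \<open>x \<notin> N\<close> that unfolding N_def P_def bad_def by blast
    have "((\<lambda>y. (indef_integral f y - indef_integral f x) / (y - x)) \<longlongrightarrow> f x) (at x)"
    proof (rule order_tendstoI)
      fix a assume "a < f x"
      then have "\<forall>\<^sub>F y in at x.
          (indef_integral (\<lambda>x. - f x) y - indef_integral (\<lambda>x. - f x) x) / (y - x) < - a"
        using f by (intro eventually_diff_quotient_less not_steep) auto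
      then show "\<forall>\<^sub>F y in at x. a < (indef_integral f y - indef_integral f x) / (y - x)"
        by (rule eventually_mono) (simp add: indef_integral_uminus diff_divide_distrib)
    next
      fix a assume "f x < a"
      then show "\<forall>\<^sub>F y in at x. (indef_integral f y - indef_integral f x) / (y - x) < a"
        using f by (intro eventually_diff_quotient_less not_steep) auto
    qed
    then show ?thesis
      by (simp add: has_field_derivative_iff)
  qed
  ultimately show ?thesis
    by (intro AE_I'[of N]) (auto simp: negligible_iff_null_sets)
qed

section \<open>Nondecreasing functions on Omega and their law\<close>

lemma Omega_lmeasurable [simp]: "Omega \<in> lmeasurable"
  unfolding Omega_def by simp

lemma Omega_sets [simp]: "Omega \<in> sets lebesgue"
  using Omega_lmeasurable by blast

lemma AE_Omega_neq: "AE m in lebesgue_on Omega. m \<in> Omega \<and> m \<noteq> c"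
  by (subst AE_restrict_space_iff) (auto intro: eventually_mono[OF AE_lebesgue_neq[of c]])

lemma finite_measure_lebesgue_on_Omega: "finite_measure (lebesgue_on Omega)"
proof (rule finite_measureI)
  have "emeasure (lebesgue_on Omega) Omega = emeasure lebesgue Omega"
    by (rule emeasure_restrict_space) auto
  then show "emeasure (lebesgue_on Omega) (space (lebesgue_on Omega)) \<noteq> \<infinity>"
    using fmeasurableD2[OF Omega_lmeasurable] by simp
qed

lemma L2_integrable:
  assumes "L2 g"
  shows "integrable (lebesgue_on Omega) g"
proof (rule Bochner_Integration.integrable_bound[of _ "\<lambda>m. 1 + (g m)\<^sup>2"])
  have "integrable (lebesgue_on Omega) (\<lambda>_. 1::real)"
    by (rule finite_measure.integrable_const[OF finite_measure_lebesgue_on_Omega])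
  then show "integrable (lebesgue_on Omega) (\<lambda>m. 1 + (g m)\<^sup>2)"
    using assms unfolding L2_def by simp
  show "AE m in lebesgue_on Omega. norm (g m) \<le> norm (1 + (g m)\<^sup>2)"
  proof (rule AE_I2)
    fix m
    have "\<bar>g m\<bar> \<le> 1 + (g m)\<^sup>2"
      using sum_squares_ge_zero[of "\<bar>g m\<bar> - 1" 0] by (simp add: power2_eq_square algebra_simps)
    then show "norm (g m) \<le> norm (1 + (g m)\<^sup>2)"
      by simp
  qed
qed (use assms in \<open>simp add: L2_def\<close>)

lemma measure_mu:
  assumes X: "X \<in> borel_measurable (lebesgue_on Omega)" and A: "A \<in> sets borel"
  shows "measure (mu X) A = measure lebesgue {m \<in> Omega. X m \<in> A}"
proof -
  have "measure (mu X) A = measure (lebesgue_on Omega) (X -` A \<inter> Omega)"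
    unfolding mu_def using X A by (simp add: measure_distr)
  also have "\<dots> = measure lebesgue {m \<in> Omega. X m \<in> A}"
    by (subst measure_restrict_space) (auto intro: arg_cong[where f="measure lebesgue"])
  finally show ?thesis .
qed

lemma finite_borel_measure_mu:
  assumes X: "X \<in> borel_measurable (lebesgue_on Omega)"
  shows "finite_borel_measure (mu X)"
proof -
  have "finite_measure (mu X)"
    unfolding mu_def using finite_measure_lebesgue_on_Omega X
    by (rule finite_measure.finite_measure_distr)
  then show ?thesis
    unfolding finite_borel_measure_def finite_borel_measure_axioms_def mu_def by simp
qed

lemma RN_deriv_M_eq:
  assumes X: "X \<in> borel_measurable (lebesgue_on Omega)"
    and \<alpha>: "\<alpha> = measure lebesgue {m \<in> Omega. X m < x}"
    and \<beta>: "\<beta> = measure lebesgue {m \<in> Omega. X m \<le> x}"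
  shows "RN_deriv_M X G x = (if \<alpha> < \<beta> then (G \<beta> - G \<alpha>) / (\<beta> - \<alpha>) else deriv G \<beta>)"
proof -
  interpret finite_borel_measure "mu X"
    using finite_borel_measure_mu[OF X] .
  have distM: "distM X = cdf (mu X)"
    using measure_mu[OF X] by (auto simp: distM_def cdf_def)
  have "(distM X \<longlongrightarrow> \<alpha>) (at_left x)"
    using cdf_at_left[of x] measure_mu[OF X, of "{..<x}"] unfolding distM \<alpha> by simp
  then have "Lim (at_left x) (distM X) = \<alpha>"
    by (intro tendsto_Lim trivial_limit_at_left_real)
  moreover have "distM X x = \<beta>"
    unfolding distM_def \<beta> ..
  moreover have "measure (mu X) {x} = \<beta> - \<alpha>"
  proof -
    have "measure (mu X) ({..<x} \<union> {x}) = measure (mu X) {..<x} + measure (mu X) {x}"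
      by (intro finite_measure_Union) auto
    moreover have "{..<x} \<union> {x} = {..x}"
      by auto
    ultimately show ?thesis
      using measure_mu[OF X, of "{..<x}"] measure_mu[OF X, of "{..x}"] \<alpha> \<beta> by simp
  qed
  ultimately show ?thesis
    unfolding RN_deriv_M_def by simp
qed

lemma normal_cone_test:
  assumes "W \<in> normal_cone X" and "inK (\<lambda>m. X m - \<phi> m)"
  shows "0 \<le> (\<integral>m. \<phi> m * W m \<partial>lebesgue_on Omega)"
proof -
  have "(\<integral>m. W m * ((X m - \<phi> m) - X m) \<partial>lebesgue_on Omega) \<le> 0"
    using assms unfolding normal_cone_def by blast
  moreover have "(\<integral>m. W m * ((X m - \<phi> m) - X m) \<partial>lebesgue_on Omega)
      = - (\<integral>m. \<phi> m * W m \<partial>lebesgue_on Omega)"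
    by (simp add: mult.commute)
  ultimately show ?thesis
    by simp
qed

lemma initial_segment_Omega:
  assumes D: "D \<subseteq> Omega" "D \<in> sets lebesgue"
    and down: "\<And>a b. a \<in> D \<Longrightarrow> b \<in> Omega \<Longrightarrow> b \<le> a \<Longrightarrow> b \<in> D" and m: "m \<in> Omega"
  shows "m < measure lebesgue D \<Longrightarrow> m \<in> D" and "measure lebesgue D < m \<Longrightarrow> m \<notin> D"
proof -
  have D_lmeas: "D \<in> lmeasurable"
    by (rule fmeasurableI2[OF Omega_lmeasurable D(1,2)])
  have m01: "0 < m" "m < 1"
    using m unfolding Omega_def by auto
  show "m \<in> D" if "m < measure lebesgue D"
  proof (rule ccontr)
    assume "m \<notin> D"
    have "D \<subseteq> {0<..<m}"
    proof
      fix d assume "d \<in> D"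
      then have "d \<in> Omega"
        using D(1) by blast
      moreover have "\<not> m \<le> d"
        using down[OF \<open>d \<in> D\<close> m] \<open>m \<notin> D\<close> by blast
      ultimately show "d \<in> {0<..<m}"
        unfolding Omega_def by auto
    qed
    then have "measure lebesgue D \<le> m"
      using measure_mono_fmeasurable[OF _ D(2), of "{0<..<m}"] m01 by simp
    with that show False
      by simp
  qed
  show "m \<notin> D" if "measure lebesgue D < m"
  proof
    assume "m \<in> D"
    have "{0<..m} \<subseteq> D"
    proof
      fix b assume "b \<in> {0<..m}"
      then have "b \<in> Omega"
        using m01 unfolding Omega_def by auto
      then show "b \<in> D"
        using down[OF \<open>m \<in> D\<close>] \<open>b \<in> {0<..m}\<close> by auto
    qed
    then have "m \<le> measure lebesgue D"
      using measure_mono_fmeasurable[OF _ _ D_lmeas, of "{0<..m}"] m01 by simp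
    with that show False
      by simp
  qed
qed

lemma inK_measurable: "inK X \<Longrightarrow> X \<in> borel_measurable (lebesgue_on Omega)"
  unfolding inK_def L2_def by simp

lemma inK_truncate:
  assumes X: "inK X"
  shows "inK (\<lambda>m. if m < k then min (X m) c else X m)"
  unfolding inK_def L2_def
proof (intro conjI)
  note [measurable] = inK_measurable[OF X]
  have [measurable]: "(\<lambda>m. m) \<in> borel_measurable (lebesgue_on Omega)"
    using id_borel_measurable_lebesgue_on by (simp add: id_def)
  show "(\<lambda>m. if m < k then min (X m) c else X m) \<in> borel_measurable (lebesgue_on Omega)"
    by measurable
  show "integrable (lebesgue_on Omega) (\<lambda>m. (if m < k then min (X m) c else X m)\<^sup>2)"
  proof (rule Bochner_Integration.integrable_bound[of _ "\<lambda>m. (X m)\<^sup>2 + c\<^sup>2"])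
    show "integrable (lebesgue_on Omega) (\<lambda>m. (X m)\<^sup>2 + c\<^sup>2)"
      using X unfolding inK_def L2_def
      by (intro Bochner_Integration.integrable_add
          finite_measure.integrable_const[OF finite_measure_lebesgue_on_Omega]) auto
    show "AE m in lebesgue_on Omega.
        norm ((if m < k then min (X m) c else X m)\<^sup>2) \<le> norm ((X m)\<^sup>2 + c\<^sup>2)"
      by (intro AE_I2) (simp add: min_def)
  qed measurable
  show "mono_on Omega (\<lambda>m. if m < k then min (X m) c else X m)"
  proof (rule mono_onI)
    fix a b assume ab: "a \<in> Omega" "b \<in> Omega" "a \<le> b"
    then have "X a \<le> X b"
      using X unfolding inK_def by (auto dest: mono_onD)
    then show "(if a < k then min (X a) c else X a) \<le> (if b < k then min (X b) c else X b)"
      using ab by (auto simp: min_def)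
  qed
qed

context
  fixes X :: "real \<Rightarrow> real"
  assumes X: "inK X"
begin

lemma sublevel_sets:
  "{m \<in> Omega. X m < x} \<in> sets lebesgue" "{m \<in> Omega. X m \<le> x} \<in> sets lebesgue"
proof -
  note [measurable] = inK_measurable[OF X]
  have "{m \<in> space (lebesgue_on Omega). X m < x} \<in> sets (lebesgue_on Omega)"
    "{m \<in> space (lebesgue_on Omega). X m \<le> x} \<in> sets (lebesgue_on Omega)"
    by measurable
  then show "{m \<in> Omega. X m < x} \<in> sets lebesgue" "{m \<in> Omega. X m \<le> x} \<in> sets lebesgue"
    by (simp_all add: sets_restrict_space_iff)
qed

lemma sublevel_position:
  assumes "m \<in> Omega"
  shows "m < measure lebesgue {m \<in> Omega. X m < x} \<Longrightarrow> X m < x"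
    and "measure lebesgue {m \<in> Omega. X m < x} < m \<Longrightarrow> x \<le> X m"
    and "m < measure lebesgue {m \<in> Omega. X m \<le> x} \<Longrightarrow> X m \<le> x"
    and "measure lebesgue {m \<in> Omega. X m \<le> x} < m \<Longrightarrow> x < X m"
proof -
  have mono: "X b \<le> X a" if "a \<in> Omega" "b \<in> Omega" "b \<le> a" for a b
    using X that unfolding inK_def by (auto dest: mono_onD)
  have down_less: "b \<in> {m \<in> Omega. X m < x}"
    if "a \<in> {m \<in> Omega. X m < x}" "b \<in> Omega" "b \<le> a" for a b
    using that mono[of a b] by auto
  have down_le: "b \<in> {m \<in> Omega. X m \<le> x}"
    if "a \<in> {m \<in> Omega. X m \<le> x}" "b \<in> Omega" "b \<le> a" for a b
    using that mono[of a b] by auto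
  show "X m < x" if "m < measure lebesgue {m \<in> Omega. X m < x}"
    using initial_segment_Omega(1)[OF _ sublevel_sets(1) _ assms that] down_less by blast
  show "x \<le> X m" if "measure lebesgue {m \<in> Omega. X m < x} < m"
    using initial_segment_Omega(2)[OF _ sublevel_sets(1) _ assms that] down_less assms by force
  show "X m \<le> x" if "m < measure lebesgue {m \<in> Omega. X m \<le> x}"
    using initial_segment_Omega(1)[OF _ sublevel_sets(2) _ assms that] down_le by blast
  show "x < X m" if "measure lebesgue {m \<in> Omega. X m \<le> x} < m"
    using initial_segment_Omega(2)[OF _ sublevel_sets(2) _ assms that] down_le assms by force
qed

end

section \<open>Flat intervals\<close>

context
  fixes X :: "real \<Rightarrow> real" and x \<alpha> \<beta> :: real
  assumes X: "inK X"
    and \<alpha>: "\<alpha> = measure lebesgue {m \<in> Omega. X m < x}"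
    and \<beta>: "\<beta> = measure lebesgue {m \<in> Omega. X m \<le> x}"
    and flat: "\<alpha> < \<beta>"
begin

lemma flat_interval_subset: "{\<alpha><..<\<beta>} \<subseteq> Omega"
proof -
  have "\<beta> \<le> measure lebesgue Omega"
    unfolding \<beta> using sublevel_sets[OF X] by (intro measure_mono_fmeasurable) auto
  then have "\<beta> \<le> 1"
    by (simp add: Omega_def)
  moreover have "0 \<le> \<alpha>"
    unfolding \<alpha> by simp
  ultimately show ?thesis
    unfolding Omega_def by auto
qed

lemma flat_interval_level:
  assumes "m \<in> {\<alpha><..<\<beta>}"
  shows "X m = x"
proof -
  have "m \<in> Omega"
    using assms flat_interval_subset by blast
  then have "x \<le> X m" "X m \<le> x"
    using sublevel_position(2,3)[OF X \<open>m \<in> Omega\<close>, of x] assms \<alpha> \<beta> by auto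
  then show ?thesis
    by simp
qed

lemma flat_interval_endpoints: "\<alpha> \<notin> Omega_X X" "\<beta> \<notin> Omega_X X"
proof -
  have symmetric_points: "\<exists>\<delta>>0. \<delta> < \<beta> - \<alpha> \<and> p - \<delta> \<in> Omega \<and> p + \<delta> \<in> Omega \<and> X (p - \<delta>) = X (p + \<delta>)"
    if "p \<in> Omega_X X" for p
  proof -
    obtain e where e: "e > 0" "\<And>q. q \<in> ball p e \<Longrightarrow> q \<in> Omega \<and> X q = X p"
      using \<open>p \<in> Omega_X X\<close> unfolding Omega_X_def by blast
    define \<delta> where "\<delta> = min e (\<beta> - \<alpha>) / 2"
    have "0 < \<delta>" "\<delta> < e" "\<delta> < \<beta> - \<alpha>"
      using e(1) flat unfolding \<delta>_def by (auto simp: min_def)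
    moreover have "p - \<delta> \<in> ball p e" "p + \<delta> \<in> ball p e"
      using \<open>0 < \<delta>\<close> \<open>\<delta> < e\<close> by (auto simp: dist_real_def)
    ultimately show ?thesis
      using e(2)[of "p - \<delta>"] e(2)[of "p + \<delta>"] by (intro exI[of _ \<delta>]) auto
  qed
  show "\<alpha> \<notin> Omega_X X"
  proof
    assume "\<alpha> \<in> Omega_X X"
    then obtain \<delta> where "0 < \<delta>" "\<delta> < \<beta> - \<alpha>" "\<alpha> - \<delta> \<in> Omega" "X (\<alpha> - \<delta>) = X (\<alpha> + \<delta>)"
      using symmetric_points by blast
    moreover have "X (\<alpha> - \<delta>) < x"
      using sublevel_position(1)[OF X \<open>\<alpha> - \<delta> \<in> Omega\<close>] \<alpha> \<open>0 < \<delta>\<close> by simp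
    ultimately show False
      using flat_interval_level[of "\<alpha> + \<delta>"] by simp
  qed
  show "\<beta> \<notin> Omega_X X"
  proof
    assume "\<beta> \<in> Omega_X X"
    then obtain \<delta> where "0 < \<delta>" "\<delta> < \<beta> - \<alpha>" "\<beta> + \<delta> \<in> Omega" "X (\<beta> - \<delta>) = X (\<beta> + \<delta>)"
      using symmetric_points by blast
    moreover have "x < X (\<beta> + \<delta>)"
      using sublevel_position(4)[OF X \<open>\<beta> + \<delta> \<in> Omega\<close>] \<beta> \<open>0 < \<delta>\<close> by simp
    ultimately show False
      using flat_interval_level[of "\<beta> - \<delta>"] by simp
  qed
qed

lemma flat_interval_Omega_X: "{\<alpha><..<\<beta>} \<subseteq> Omega_X X"
proof
  fix q assume q: "q \<in> {\<alpha><..<\<beta>}"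
  have "ball q (min (q - \<alpha>) (\<beta> - q)) \<subseteq> {\<alpha><..<\<beta>}"
    by (auto simp: dist_real_def)
  then show "q \<in> Omega_X X"
    unfolding Omega_X_def using q flat_interval_subset flat_interval_level
    by (intro CollectI conjI exI[of _ "min (q - \<alpha>) (\<beta> - q)"]) auto
qed

lemma connected_component_flat_interval:
  assumes p: "p \<in> {\<alpha><..<\<beta>}"
  shows "connected_component_set (Omega_X X) p = {\<alpha><..<\<beta>}"
proof
  show "{\<alpha><..<\<beta>} \<subseteq> connected_component_set (Omega_X X) p"
    using p flat_interval_Omega_X by (intro connected_component_maximal) auto
  let ?C = "connected_component_set (Omega_X X) p"
  show "?C \<subseteq> {\<alpha><..<\<beta>}"
  proof
    fix y assume y: "y \<in> ?C"
    have p_C: "p \<in> ?C"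
      using flat_interval_Omega_X p by auto
    show "y \<in> {\<alpha><..<\<beta>}"
    proof (rule ccontr)
      assume "y \<notin> {\<alpha><..<\<beta>}"
      then have "\<alpha> \<in> {y..p} \<or> \<beta> \<in> {p..y}"
        using p by auto
      then have "\<alpha> \<in> ?C \<or> \<beta> \<in> ?C"
        using connected_contains_Icc[OF connected_connected_component y p_C]
          connected_contains_Icc[OF connected_connected_component p_C y] by blast
      then show False
        using connected_component_subset flat_interval_endpoints by blast
    qed
  qed
qed

lemma Proj_H_flat_interval:
  assumes "p \<in> {\<alpha><..<\<beta>}"
  shows "Proj_H X g p = (\<integral>w. g w \<partial>lebesgue_on {\<alpha><..<\<beta>}) / (\<beta> - \<alpha>)"
  using assms flat_interval_Omega_X flat
  unfolding Proj_H_def Let_def connected_component_flat_interval[OF assms] by auto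

lemma flat_interval_excess_tendsto:
  assumes "m \<in> Omega" "m < \<beta>" "m \<noteq> \<alpha>"
  shows "(\<lambda>n. Suc n * max 0 (X m - x + 1 / Suc n)) \<longlonglongrightarrow> indicator {\<alpha><..} m"
proof (cases "\<alpha> < m")
  case True
  then have "X m = x"
    using assms by (intro flat_interval_level) auto
  then show ?thesis
    using True by simp
next
  case False
  then have "X m < x"
    using sublevel_position(1)[OF X \<open>m \<in> Omega\<close>, of x] \<alpha> \<open>m \<noteq> \<alpha>\<close> by simp
  then obtain N :: nat where N: "1 / Suc N < x - X m"
    by (metis diff_gt_0_iff_gt nat_approx_posE)
  have "max 0 (X m - x + 1 / Suc n) = 0" if "N \<le> n" for n
  proof -
    have "1 / Suc n \<le> 1 / Suc N"
      using that by (simp add: frac_le)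
    then show ?thesis
      using N by simp
  qed
  then have "\<forall>\<^sub>F n in sequentially. Suc n * max 0 (X m - x + 1 / Suc n) = indicator {\<alpha><..} m"
    using False by (auto simp: eventually_sequentially)
  then show ?thesis
    by (rule tendsto_eventually)
qed

lemma integral_flat_interval_excess_tendsto:
  fixes W :: "real \<Rightarrow> real" and k :: real and \<phi> :: "nat \<Rightarrow> real \<Rightarrow> real"
  defines "\<phi> \<equiv> \<lambda>n m. if m < k then max 0 (X m - x + 1 / Suc n) else 0"
  assumes W: "integrable (lebesgue_on Omega) W" and k: "k < \<beta>"
  shows "(\<lambda>n. \<integral>m. Suc n * \<phi> n m * W m \<partial>lebesgue_on Omega)
    \<longlonglongrightarrow> (\<integral>m. indicator {\<alpha><..<k} m * W m \<partial>lebesgue_on Omega)"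
proof (rule integral_dominated_convergence[where w="\<lambda>m. \<bar>W m\<bar>"])
  have [measurable]: "X \<in> borel_measurable (lebesgue_on Omega)"
    "W \<in> borel_measurable (lebesgue_on Omega)"
    using inK_measurable[OF X] W by auto
  have [measurable]: "(\<lambda>m. m) \<in> borel_measurable (lebesgue_on Omega)"
    using id_borel_measurable_lebesgue_on by (simp add: id_def)
  show "(\<lambda>m. Suc n * \<phi> n m * W m) \<in> borel_measurable (lebesgue_on Omega)" for n
    unfolding \<phi>_def by measurable
  show "(\<lambda>m. indicator {\<alpha><..<k} m * W m) \<in> borel_measurable (lebesgue_on Omega)"
    by measurable
  show "AE m in lebesgue_on Omega. norm (Suc n * \<phi> n m * W m) \<le> \<bar>W m\<bar>" for n
  proof (rule AE_I2)
    fix m assume "m \<in> space (lebesgue_on Omega)"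
    then have "m < k \<Longrightarrow> X m \<le> x"
      using sublevel_position(3)[OF X, of m x] k \<beta> by simp
    then have "0 \<le> \<phi> n m" "\<phi> n m \<le> 1 / Suc n"
      by (auto simp: \<phi>_def)
    then have "0 \<le> Suc n * \<phi> n m" "Suc n * \<phi> n m \<le> 1"
      by (simp_all add: field_simps)
    then show "norm (Suc n * \<phi> n m * W m) \<le> \<bar>W m\<bar>"
      by (simp add: abs_mult mult_left_le_one_le)
  qed
  from AE_Omega_neq[of \<alpha>]
  show "AE m in lebesgue_on Omega.
      (\<lambda>n. Suc n * \<phi> n m * W m) \<longlonglongrightarrow> indicator {\<alpha><..<k} m * W m"
  proof (rule eventually_mono)
    fix m assume m: "m \<in> Omega \<and> m \<noteq> \<alpha>"
    show "(\<lambda>n. Suc n * \<phi> n m * W m) \<longlonglongrightarrow> indicator {\<alpha><..<k} m * W m"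
    proof (cases "m < k")
      case True
      then have "(\<lambda>n. Suc n * \<phi> n m) \<longlonglongrightarrow> indicator {\<alpha><..<k} m"
        using flat_interval_excess_tendsto[of m] m k by (simp add: \<phi>_def indicator_def)
      then show ?thesis
        by (intro tendsto_mult_right)
    qed (simp add: \<phi>_def)
  qed
qed (use W in auto)

lemma normal_cone_flat_interval_nonneg:
  assumes W: "W \<in> normal_cone X" and k: "\<alpha> < k" "k < \<beta>"
  shows "0 \<le> (\<integral>m. indicator {\<alpha><..<k} m * W m \<partial>lebesgue_on Omega)"
proof -
  \<comment> \<open>X - \<phi> n truncates X at level x - 1 / Suc n to the left of k; rescaled by Suc n,
    \<phi> n tends to the indicator of {\<alpha><..<k} because X < x left of \<alpha> and X = x right of it.\<close>
  define \<phi> where "\<phi> n m = (if m < k then max 0 (X m - x + 1 / Suc n) else 0)" for n :: nat and m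
  have "0 \<le> (\<integral>m. \<phi> n m * W m \<partial>lebesgue_on Omega)" for n
  proof (rule normal_cone_test[OF W])
    have "(\<lambda>m. X m - \<phi> n m) = (\<lambda>m. if m < k then min (X m) (x - 1 / Suc n) else X m)"
      by (auto simp: \<phi>_def fun_eq_iff)
    then show "inK (\<lambda>m. X m - \<phi> n m)"
      using inK_truncate[OF X] by simp
  qed
  then have nonneg: "0 \<le> (\<integral>m. Suc n * \<phi> n m * W m \<partial>lebesgue_on Omega)" for n
    by (simp add: mult.assoc)
  have "integrable (lebesgue_on Omega) W"
    using W L2_integrable unfolding normal_cone_def by blast
  from integral_flat_interval_excess_tendsto[OF this k(2)]
  have "(\<lambda>n. \<integral>m. Suc n * \<phi> n m * W m \<partial>lebesgue_on Omega)
      \<longlonglongrightarrow> (\<integral>m. indicator {\<alpha><..<k} m * W m \<partial>lebesgue_on Omega)"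
    unfolding \<phi>_def .
  then show ?thesis
    by (rule LIMSEQ_le_const) (use nonneg in auto)
qed

lemma indef_integral_above_chord:
  assumes u: "L2 u" and W: "(\<lambda>m. u m - Proj_H X u m) \<in> normal_cone X" and k: "\<alpha> < k" "k < \<beta>"
  defines "F \<equiv> indef_integral (\<lambda>w. indicator Omega w * u w)"
  shows "(k - \<alpha>) * ((F \<beta> - F \<alpha>) / (\<beta> - \<alpha>)) \<le> F k - F \<alpha>"
proof -
  define f where "f w = indicator Omega w * u w" for w
  have f: "integrable lebesgue f"
    using L2_integrable[OF u] unfolding f_def by (simp add: integrable_restrict_space)
  have F_diff: "F b - F a = (LINT w:{a<..<b}|lebesgue. u w)" if "a \<le> b" "{a<..<b} \<subseteq> Omega" for a b
  proof -
    have "(LINT w:{a<..<b}|lebesgue. f w) = (LINT w:{a<..<b}|lebesgue. u w)"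
      using that(2) unfolding f_def by (intro set_lebesgue_integral_cong) auto
    then show ?thesis
      using indef_integral_diff[OF f that(1)] unfolding F_def f_def by simp
  qed
  define avg where "avg = (F \<beta> - F \<alpha>) / (\<beta> - \<alpha>)"
  have Proj: "Proj_H X u m = avg" if "m \<in> {\<alpha><..<\<beta>}" for m
  proof -
    have "(\<integral>w. u w \<partial>lebesgue_on {\<alpha><..<\<beta>}) = (LINT w:{\<alpha><..<\<beta>}|lebesgue. u w)"
      by (simp add: integral_restrict_space set_lebesgue_integral_def)
    then show ?thesis
      using Proj_H_flat_interval[OF that] F_diff[of \<alpha> \<beta>] flat flat_interval_subset
      unfolding avg_def by simp
  qed
  have sub: "{\<alpha><..<k} \<subseteq> Omega" "{\<alpha><..<k} \<subseteq> {\<alpha><..<\<beta>}"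
    using flat_interval_subset k by auto
  then have on_interval: "m \<in> Omega" "Proj_H X u m = avg" if "m \<in> {\<alpha><..<k}" for m
    using that Proj by auto
  have u_int: "set_integrable lebesgue {\<alpha><..<k} u"
  proof -
    have "set_integrable lebesgue {\<alpha><..<k} f"
      by (rule integrable_imp_set_integrable[OF f]) simp
    moreover have "set_integrable lebesgue {\<alpha><..<k} f = set_integrable lebesgue {\<alpha><..<k} u"
      using sub(1) unfolding f_def by (intro set_integrable_cong) auto
    ultimately show ?thesis
      by simp
  qed
  have "0 \<le> (\<integral>m. indicator {\<alpha><..<k} m * (u m - Proj_H X u m) \<partial>lebesgue_on Omega)"
    by (rule normal_cone_flat_interval_nonneg[OF W k])
  also have "\<dots> = (LINT m:{\<alpha><..<k}|lebesgue. u m - avg)"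
    using on_interval unfolding set_lebesgue_integral_def
    by (subst integral_restrict_space)
      (auto simp: indicator_def intro!: Bochner_Integration.integral_cong)
  also have "\<dots> = (F k - F \<alpha>) - avg * (k - \<alpha>)"
    using k sub
    by (simp add: set_integral_diff(2)[OF u_int set_integrable_const] set_integral_const F_diff)
  finally show ?thesis
    unfolding avg_def by (simp add: algebra_simps)
qed

end

section \<open>The Kruzkov entropy inequality\<close>

lemma Kruzkov_difference_quotient_le:
  fixes a b k :: real and U :: "real \<Rightarrow> real"
  assumes ab: "a < b"
    and chord: "a < k \<Longrightarrow> k < b \<Longrightarrow> (k - a) * ((U b - U a) / (b - a)) \<le> U k - U a"
  shows "(sgn (b - k) * (U b - U k) - sgn (a - k) * (U a - U k)) / (b - a)
    \<le> (\<bar>b - k\<bar> - \<bar>a - k\<bar>) / (b - a) * ((U b - U a) / (b - a))"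
proof -
  define s where "s = (U b - U a) / (b - a)"
  have Ub: "U b = U a + (b - a) * s"
    using ab by (simp add: s_def)
  have "sgn (b - k) * (U b - U k) - sgn (a - k) * (U a - U k) \<le> (\<bar>b - k\<bar> - \<bar>a - k\<bar>) * s"
  proof -
    consider "k \<le> a" | "b \<le> k" | "a < k" "k < b"
      by linarith
    then show ?thesis
    proof cases
      case 1
      then show ?thesis
        using ab Ub by (cases "k = a") (auto simp: algebra_simps)
    next
      case 2
      then show ?thesis
        using ab Ub by (cases "k = b") (auto simp: algebra_simps)
    next
      case 3
      then show ?thesis
        using chord[OF 3] Ub unfolding s_def[symmetric] by (simp add: algebra_simps)
    qed
  qed
  then show ?thesis
    using ab unfolding s_def[symmetric] by (simp add: divide_right_mono)
qed

lemma has_real_derivative_sgn_mult: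
  fixes F :: "real \<Rightarrow> real"
  assumes F: "(F has_real_derivative D) (at m)" and "m \<noteq> k"
  shows "((\<lambda>y. sgn (y - k) * (F y - F k)) has_real_derivative sgn (m - k) * D) (at m)"
proof -
  define S where "S = (if m < k then {..<k} else {k<..})"
  have "((\<lambda>y. sgn (m - k) * (F y - F k)) has_real_derivative sgn (m - k) * D) (at m)"
    using F by (intro derivative_eq_intros) auto
  moreover have "open S" "m \<in> S"
    using \<open>m \<noteq> k\<close> by (auto simp: S_def)
  moreover have "sgn (m - k) * (F y - F k) = sgn (y - k) * (F y - F k)" if "y \<in> S" for y
    using that \<open>m \<noteq> k\<close> by (cases "m < k") (simp_all add: S_def)
  ultimately show ?thesis
    by (rule has_field_derivative_transform_within_open)
qed

lemma primU_eq_indef_integral: "primU U t = indef_integral (\<lambda>w. indicator Omega w * U t w)"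
proof
  fix y
  have "indicator ({0..y} \<inter> Omega) w = (indicator {..y} w * indicator Omega w :: real)" for w
    by (auto simp: Omega_def indicator_def)
  then show "primU U t y = indef_integral (\<lambda>w. indicator Omega w * U t w) y"
    unfolding primU_def indef_integral_def set_lebesgue_integral_def by (simp add: mult.assoc)
qed

lemma AE_has_real_derivative_indef_integral:
  assumes "L2 u"
  shows "AE m in lebesgue_on Omega.
    (indef_integral (\<lambda>w. indicator Omega w * u w) has_real_derivative u m) (at m)"
proof -
  have "integrable lebesgue (\<lambda>w. indicator Omega w * u w)"
    using L2_integrable[OF assms] by (simp add: integrable_restrict_space)
  then show ?thesis
    by (subst AE_restrict_space_iff) (auto elim!: eventually_mono[OF lebesgue_differentiation])
qed

lemma Kruzkov_RN_inequality_at: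
  fixes X u :: "real \<Rightarrow> real"
  defines "F \<equiv> indef_integral (\<lambda>w. indicator Omega w * u w)"
  assumes X: "inK X" and u: "L2 u" and W: "(\<lambda>m. u m - Proj_H X u m) \<in> normal_cone X"
    and m: "m \<in> Omega" "m \<noteq> k" and F': "(F has_real_derivative u m) (at m)"
  shows "RN_deriv_M X (\<lambda>y. sgn (y - k) * (F y - F k)) (X m)
    \<le> RN_deriv_M X (eta k) (X m) * RN_deriv_M X F (X m)"
proof -
  define \<alpha> where "\<alpha> = measure lebesgue {m' \<in> Omega. X m' < X m}"
  define \<beta> where "\<beta> = measure lebesgue {m' \<in> Omega. X m' \<le> X m}"
  have RN: "RN_deriv_M X G (X m) = (if \<alpha> < \<beta> then (G \<beta> - G \<alpha>) / (\<beta> - \<alpha>) else deriv G \<beta>)" for G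
    using RN_deriv_M_eq[OF inK_measurable[OF X] \<alpha>_def \<beta>_def] .
  have "\<alpha> \<le> m" "m \<le> \<beta>"
    using sublevel_position(1,4)[OF X m(1), of "X m"] unfolding \<alpha>_def \<beta>_def by force+
  show ?thesis
  proof (cases "\<alpha> < \<beta>")
    case True
    have "(sgn (\<beta> - k) * (F \<beta> - F k) - sgn (\<alpha> - k) * (F \<alpha> - F k)) / (\<beta> - \<alpha>)
        \<le> (\<bar>\<beta> - k\<bar> - \<bar>\<alpha> - k\<bar>) / (\<beta> - \<alpha>) * ((F \<beta> - F \<alpha>) / (\<beta> - \<alpha>))"
      using indef_integral_above_chord[OF X \<alpha>_def \<beta>_def True u W]
      by (intro Kruzkov_difference_quotient_le[OF True]) (simp add: F_def)
    then show ?thesis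
      unfolding RN using True by (simp add: eta_def)
  next
    case False
    then have "\<beta> = m"
      using \<open>\<alpha> \<le> m\<close> \<open>m \<le> \<beta>\<close> by simp
    have "eta k = (\<lambda>y. sgn (y - k) * (y - k))"
      by (simp add: eta_def abs_sgn mult.commute fun_eq_iff)
    then have "deriv (eta k) m = sgn (m - k)"
      using has_real_derivative_sgn_mult[OF DERIV_ident m(2)] by (simp add: DERIV_imp_deriv)
    moreover have "deriv (\<lambda>y. sgn (y - k) * (F y - F k)) m = sgn (m - k) * u m"
      using has_real_derivative_sgn_mult[OF F' m(2)] by (rule DERIV_imp_deriv)
    ultimately show ?thesis
      unfolding RN using False \<open>\<beta> = m\<close> DERIV_imp_deriv[OF F'] by simp
  qed
qed

theorem corollary5p3:
  fixes X :: "real \<Rightarrow> real" and U :: "real \<Rightarrow> real \<Rightarrow> real" and t :: real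
  assumes "inK X"
    and "\<forall>m\<in>Omega. continuous (at_right m) X"
    and "L2 (U t)"
    and "(\<lambda>m. U t m - Proj_H X (U t) m) \<in> normal_cone X"
  shows "\<forall>k::real. AE m in lebesgue_on Omega.
           RN_deriv_M X (qflux U k t) (X m)
             \<le> RN_deriv_M X (eta k) (X m) * RN_deriv_M X (primU U t) (X m)"
proof
  fix k :: real
  from AE_Omega_neq[of k] AE_has_real_derivative_indef_integral[OF assms(3)]
  show "AE m in lebesgue_on Omega. RN_deriv_M X (qflux U k t) (X m)
      \<le> RN_deriv_M X (eta k) (X m) * RN_deriv_M X (primU U t) (X m)"
    unfolding qflux_def[abs_def] primU_eq_indef_integral
    by eventually_elim (use Kruzkov_RN_inequality_at[OF assms(1,3,4)] in blast)
qed

end
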